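(* Let $\sigma$ be any one of the DF-QuAD, Quadratic Energy (QE) or Restricted Euler-based (REB) gradual semantics. Then for every acyclic QBAF $\mathcal{Q}=\langle \mathcal{A},\mathcal{R}^-,\mathcal{R}^+,\tau\rangle$, every $\alpha,\beta\in\mathcal{A}$ with $\alpha\neq\beta$ and $\mathcal{R}(\beta)=\{(\beta,\alpha)\}$, and every $\tau':\mathcal{A}\to[0,1]$: (1) if $(\beta,\alpha)\in\mathcal{R}^-$, then $\sigma(\alpha)\le\sigma_{\mathcal{R}\setminus\{(\beta,\alpha)\}}(\alpha)$; (2) if $(\beta,\alpha)\in\mathcal{R}^+$, then $\sigma(\alpha)\ge\sigma_{\mathcal{R}\setminus\{(\beta,\alpha)\}}(\alpha)$; (3) if $(\beta,\alpha)\in\mathcal{R}^-$, $\tau(\beta)\le\tau'(\beta)$ and $\tau(\gamma)=\tau'(\gamma)$ for all $\gamma\in\mathcal{A}\setminus\{\beta\}$, then $\sigma(\alpha)\ge\sigma_{\tau'}(\alpha)$; (4) if $(\beta,\alpha)\in\mathcal{R}^+$, $\tau(\beta)\le\tau'(\beta)$ and $\tau(\gamma)=\tau'(\gamma)$ for all $\gamma\in\mathcal{A}\setminus\{\beta\}$, then $\sigma(\alpha)\le\sigma_{\tau'}(\alpha)$. That is, DF-QuAD, QE and REB satisfy monotonicity on acyclic QBAFs.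
   Context: A QBAF is a quadruple $\mathcal{Q}=\langle\mathcal{A},\mathcal{R}^-,\mathcal{R}^+,\tau\rangle$ with $\mathcal{A}$ a finite set of arguments, $\mathcal{R}^-,\mathcal{R}^+\subseteq\mathcal{A}\times\mathcal{A}$ disjoint attack and support relations, and $\tau:\mathcal{A}\to[0,1]$ a base score function. Write $\mathcal{R}=\mathcal{R}^-\cup\mathcal{R}^+$ and $\mathcal{R}(\beta)=\{(\beta,\gamma)\in\mathcal{R}:\gamma\in\mathcal{A}\}$ for the outgoing edges of $\beta$. A QBAF is acyclic if the directed graph $(\mathcal{A},\mathcal{R})$ has no cycle. For $\mathcal{S}\subseteq\mathcal{R}$, $\mathcal{Q}^{|\mathcal{S}}=\langle\mathcal{A},\mathcal{R}^-\cap\mathcal{S},\mathcal{R}^+\cap\mathcal{S},\tau\rangle$ and $\sigma_{\mathcal{S}}(\alpha)$ is the strength of $\alpha$ in $\mathcal{Q}^{|\mathcal{S}}$; for $\tau':\mathcal{A}\to[0,1]$, $\mathcal{Q}^{|\tau'}=\langle\mathcal{A},\mathcal{R}^-,\mathcal{R}^+,\tau'\rangle$ and $\sigma_{\tau'}(\alpha)$ is the strength of $\alpha$ in $\mathcal{Q}^{|\tau'}$; $\sigma(\alpha)$ is the strength in $\mathcal{Q}$. On an acyclic QBAF the three semantics are defined recursively (following a topological order) as follows. DF-QuAD: with $v_{att}=1-\prod_{(\beta,\alpha)\in\mathcal{R}^-}(1-\sigma(\beta))$ and $v_{sup}=1-\prod_{(\beta,\alpha)\in\mathcal{R}^+}(1-\sigma(\beta))$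 (empty products equal $1$), $\sigma(\alpha)=\tau(\alpha)-\tau(\alpha)(v_{att}-v_{sup})$ if $v_{att}\ge v_{sup}$ and $\sigma(\alpha)=\tau(\alpha)+(1-\tau(\alpha))(v_{sup}-v_{att})$ otherwise. QE: with $E_\alpha=\sum_{(\beta,\alpha)\in\mathcal{R}^+}\sigma(\beta)-\sum_{(\beta,\alpha)\in\mathcal{R}^-}\sigma(\beta)$, $\sigma(\alpha)=\tau(\alpha)-\tau(\alpha)\frac{E_\alpha^2}{1+E_\alpha^2}$ if $E_\alpha\le 0$ and $\sigma(\alpha)=\tau(\alpha)+(1-\tau(\alpha))\frac{E_\alpha^2}{1+E_\alpha^2}$ if $E_\alpha>0$. REB: with the same $E_\alpha$, $\sigma(\alpha)=1-\frac{1-\tau(\alpha)^2}{1+\tau(\alpha)e^{E_\alpha}}$. *)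

theory Defs
  imports Main "HOL-Analysis.Analysis"
begin

definition qbaf :: "'a set \<Rightarrow> ('a \<times> 'a) set \<Rightarrow> ('a \<times> 'a) set \<Rightarrow> ('a \<Rightarrow> real) \<Rightarrow> bool" where
  "qbaf A Att Sp tau \<longleftrightarrow> finite A \<and> Att \<subseteq> A \<times> A \<and> Sp \<subseteq> A \<times> A \<and> Att \<inter> Sp = {}
     \<and> (\<forall>a\<in>A. 0 \<le> tau a \<and> tau a \<le> 1)"

definition acyclic_qbaf :: "'a set \<Rightarrow> ('a \<times> 'a) set \<Rightarrow> ('a \<times> 'a) set \<Rightarrow> ('a \<Rightarrow> real) \<Rightarrow> bool" where
  "acyclic_qbaf A Att Sp tau \<longleftrightarrow> qbaf A Att Sp tau \<and> acyclic (Att \<union> Sp)"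

datatype semantics = DFQuAD | QE | REB

definition attackers :: "'a set \<Rightarrow> ('a \<times> 'a) set \<Rightarrow> 'a \<Rightarrow> 'a set" where
  "attackers A Att a = {b \<in> A. (b, a) \<in> Att}"

definition supporters :: "'a set \<Rightarrow> ('a \<times> 'a) set \<Rightarrow> 'a \<Rightarrow> 'a set" where
  "supporters A Sp a = {b \<in> A. (b, a) \<in> Sp}"

fun update :: "semantics \<Rightarrow> 'a set \<Rightarrow> ('a \<times> 'a) set \<Rightarrow> ('a \<times> 'a) set \<Rightarrow> ('a \<Rightarrow> real)
                 \<Rightarrow> ('a \<Rightarrow> real) \<Rightarrow> 'a \<Rightarrow> real" where
  "update DFQuAD A Att Sp tau s a =
     (let vatt = 1 - (\<Prod>b\<in>attackers A Att a. 1 - s b);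
          vsup = 1 - (\<Prod>b\<in>supporters A Sp a. 1 - s b)
      in if vatt \<ge> vsup then tau a - tau a * (vatt - vsup)
         else tau a + (1 - tau a) * (vsup - vatt))"
| "update QE A Att Sp tau s a =
     (let E = (\<Sum>b\<in>supporters A Sp a. s b) - (\<Sum>b\<in>attackers A Att a. s b)
      in if E \<le> 0 then tau a - tau a * (E\<^sup>2 / (1 + E\<^sup>2))
         else tau a + (1 - tau a) * (E\<^sup>2 / (1 + E\<^sup>2)))"
| "update REB A Att Sp tau s a =
     (let E = (\<Sum>b\<in>supporters A Sp a. s b) - (\<Sum>b\<in>attackers A Att a. s b)
      in 1 - (1 - (tau a)\<^sup>2) / (1 + tau a * exp E))"

text \<open>On an acyclic QBAF this is
exactly the function computed recursively along a topological order.\<close>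
definition strength :: "semantics \<Rightarrow> 'a set \<Rightarrow> ('a \<times> 'a) set \<Rightarrow> ('a \<times> 'a) set \<Rightarrow> ('a \<Rightarrow> real)
                          \<Rightarrow> 'a \<Rightarrow> real" where
  "strength sem A Att Sp tau =
     (THE s. (\<forall>a\<in>A. s a = update sem A Att Sp tau s a) \<and> (\<forall>a. a \<notin> A \<longrightarrow> s a = 0))"

end

theory Submission
  imports Defs
begin

(*
  Each semantics computes the strength of an argument from its base score and the strengths
  of its parents by a function that is increasing in the base score and in the strengths of
  supporters and decreasing in the strengths of attackers. On an acyclic QBAF the strength
  function is the unique solution of the recursive equations, so it depends only on the
  ancestors of an argument. Deleting the edge (beta, alpha) changes nothing outside the
  descendants of alpha, and at alpha it has the same effect as giving beta strength 0.
  Raising tau(beta) changes nothing outside the descendants of beta and raises the strength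
  of beta; since alpha is the only child of beta, the other parents of alpha are not
  descendants of beta, so at alpha only the contribution of beta grows.
*)

(* DF-QuAD (with d = v_sup - v_att) and QE (with d = E |E| / (1 + E^2)) both move the base
   score t the fraction |d| of the way towards 1 or towards 0. *)
definition linear_influence :: "real \<Rightarrow> real \<Rightarrow> real" where
  "linear_influence t d = (if d \<le> 0 then t + t * d else t + (1 - t) * d)"

lemma linear_influence_mono:
  assumes "0 \<le> t1" "t1 \<le> t2" "t2 \<le> 1" "-1 \<le> d1" "d1 \<le> d2" "d2 \<le> 1"
  shows "linear_influence t1 d1 \<le> linear_influence t2 d2"
proof (cases "d2 \<le> 0")
  case True
  have "t1 * (1 + d1) \<le> t2 * (1 + d2)" using assms by (intro mult_mono) auto
  then show ?thesis using True assms by (simp add: linear_influence_def algebra_simps)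
next
  case False
  have right: "linear_influence t2 d2 = t2 + (1 - t2) * d2" "0 \<le> (1 - t2) * d2"
    using False assms by (simp_all add: linear_influence_def)
  show ?thesis
  proof (cases "d1 \<le> 0")
    case True
    have "linear_influence t1 d1 = t1 + t1 * d1" using True by (simp add: linear_influence_def)
    moreover have "t1 * d1 \<le> 0" using True assms by (simp add: mult_nonneg_nonpos)
    ultimately show ?thesis using right assms by linarith
  next
    case False
    have "(1 - t2) * (1 - d2) \<le> (1 - t1) * (1 - d1)" using assms by (intro mult_mono) auto
    then show ?thesis using False right unfolding linear_influence_def by (simp add: algebra_simps)
  qed
qed

lemma linear_influence_bounds:
  assumes "0 \<le> t" "t \<le> 1" "-1 \<le> d" "d \<le> 1"
  shows "0 \<le> linear_influence t d \<and> linear_influence t d \<le> 1"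
proof -
  have "linear_influence 0 (-1) \<le> linear_influence t d" "linear_influence t d \<le> linear_influence 1 1"
    using assms by (intro linear_influence_mono; simp)+
  then show ?thesis by (simp add: linear_influence_def)
qed

definition signed_square_ratio :: "real \<Rightarrow> real" where
  "signed_square_ratio E = E * \<bar>E\<bar> / (1 + E\<^sup>2)"

lemma frac_one_plus_mono: "0 \<le> (x::real) \<Longrightarrow> x \<le> y \<Longrightarrow> x / (1 + x) \<le> y / (1 + y)"
  by (simp add: field_simps)

lemma signed_square_ratio_mono:
  assumes "E1 \<le> E2" shows "signed_square_ratio E1 \<le> signed_square_ratio E2"
proof -
  consider "0 \<le> E1" | "E2 \<le> 0" | "E1 < 0" "0 < E2" by linarith
  then show ?thesis
  proof cases
    case 1
    then have "E1\<^sup>2 \<le> E2\<^sup>2" using assms by (intro power_mono) auto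
    then show ?thesis using 1 assms frac_one_plus_mono[of "E1\<^sup>2" "E2\<^sup>2"]
      by (simp add: signed_square_ratio_def power2_eq_square)
  next
    case 2
    then have "(- E2)\<^sup>2 \<le> (- E1)\<^sup>2" using assms by (intro power_mono) auto
    then have "E2\<^sup>2 \<le> E1\<^sup>2" by simp
    then show ?thesis using 2 assms frac_one_plus_mono[of "E2\<^sup>2" "E1\<^sup>2"]
      by (simp add: signed_square_ratio_def power2_eq_square)
  next
    case 3
    then show ?thesis
      by (simp add: signed_square_ratio_def divide_nonpos_pos mult_neg_pos add_pos_nonneg order_trans[of _ 0])
  qed
qed

lemma abs_signed_square_ratio_le_1: "\<bar>signed_square_ratio E\<bar> \<le> 1"
proof -
  have "\<bar>E * \<bar>E\<bar>\<bar> = E\<^sup>2" by (simp add: abs_mult power2_eq_square)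
  then show ?thesis by (simp add: signed_square_ratio_def add_pos_nonneg)
qed

definition euler_score :: "real \<Rightarrow> real \<Rightarrow> real" where
  "euler_score t E = 1 - (1 - t\<^sup>2) / (1 + t * exp E)"

lemma euler_score_mono:
  assumes "0 \<le> t1" "t1 \<le> t2" "t2 \<le> 1" "E1 \<le> E2"
  shows "euler_score t1 E1 \<le> euler_score t2 E2"
proof -
  have "t1 * exp E1 \<le> t2 * exp E2" using assms by (intro mult_mono) auto
  moreover have "t1\<^sup>2 \<le> t2\<^sup>2" using assms by (intro power_mono) auto
  moreover have "t2\<^sup>2 \<le> 1" using assms by (simp add: power_le_one)
  moreover have "0 \<le> t1 * exp E1" using assms by simp
  ultimately have "(1 - t2\<^sup>2) / (1 + t2 * exp E2) \<le> (1 - t1\<^sup>2) / (1 + t1 * exp E1)"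
    by (intro frac_le) auto
  then show ?thesis unfolding euler_score_def by simp
qed

lemma euler_score_bounds:
  assumes "0 \<le> t" "t \<le> 1"
  shows "0 \<le> euler_score t E \<and> euler_score t E \<le> 1"
proof -
  have "euler_score 0 E \<le> euler_score t E" "euler_score t E \<le> euler_score 1 E"
    using assms by (intro euler_score_mono; simp)+
  then show ?thesis by (simp add: euler_score_def)
qed

definition energy :: "'a set \<Rightarrow> ('a \<times> 'a) set \<Rightarrow> ('a \<times> 'a) set \<Rightarrow> ('a \<Rightarrow> real) \<Rightarrow> 'a \<Rightarrow> real" where
  "energy A Att Sp s a = (\<Sum>b\<in>supporters A Sp a. s b) - (\<Sum>b\<in>attackers A Att a. s b)"

lemma update_DFQuAD_eq_linear_influence:
  "update DFQuAD A Att Sp tau s a = linear_influence (tau a)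
     ((\<Prod>b\<in>attackers A Att a. 1 - s b) - (\<Prod>b\<in>supporters A Sp a. 1 - s b))"
  by (simp add: linear_influence_def Let_def algebra_simps)

lemma linear_influence_signed_square_ratio:
  "linear_influence t (signed_square_ratio E) =
     (if E \<le> 0 then t - t * (E\<^sup>2 / (1 + E\<^sup>2)) else t + (1 - t) * (E\<^sup>2 / (1 + E\<^sup>2)))"
proof -
  have "signed_square_ratio E = (if E \<le> 0 then - (E\<^sup>2 / (1 + E\<^sup>2)) else E\<^sup>2 / (1 + E\<^sup>2))"
    by (simp add: signed_square_ratio_def power2_eq_square)
  moreover have "0 \<le> E\<^sup>2 / (1 + E\<^sup>2)" by (simp add: add_pos_nonneg)
  moreover have "0 < E\<^sup>2 / (1 + E\<^sup>2)" if "\<not> E \<le> 0" using that by (simp add: add_pos_nonneg)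
  ultimately show ?thesis by (auto simp: linear_influence_def)
qed

lemma update_QE_eq_linear_influence:
  "update QE A Att Sp tau s a = linear_influence (tau a) (signed_square_ratio (energy A Att Sp s a))"
  by (simp only: linear_influence_signed_square_ratio energy_def update.simps Let_def)

lemma update_REB_eq_euler_score:
  "update REB A Att Sp tau s a = euler_score (tau a) (energy A Att Sp s a)"
  by (simp add: euler_score_def energy_def)

lemma update_mono:
  assumes "0 \<le> tau1 a" "tau1 a \<le> tau2 a" "tau2 a \<le> 1"
    and att: "\<And>b. b \<in> attackers A Att a \<Longrightarrow> 0 \<le> s2 b \<and> s2 b \<le> s1 b \<and> s1 b \<le> 1"
    and sup: "\<And>b. b \<in> supporters A Sp a \<Longrightarrow> 0 \<le> s1 b \<and> s1 b \<le> s2 b \<and> s2 b \<le> 1"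
  shows "update sem A Att Sp tau1 s1 a \<le> update sem A Att Sp tau2 s2 a"
proof -
  let ?Pa = "\<lambda>s. \<Prod>b\<in>attackers A Att a. 1 - s b"
  let ?Ps = "\<lambda>s. \<Prod>b\<in>supporters A Sp a. 1 - s b"
  have "?Pa s1 \<le> ?Pa s2" "?Ps s2 \<le> ?Ps s1"
    using att sup by (auto intro!: prod_mono)
  moreover have "0 \<le> ?Pa s1" "?Pa s2 \<le> 1" "0 \<le> ?Ps s2" "?Ps s1 \<le> 1"
    by (auto intro!: prod_nonneg prod_le_1 dest!: att sup)
  ultimately have dfquad: "update DFQuAD A Att Sp tau1 s1 a \<le> update DFQuAD A Att Sp tau2 s2 a"
    unfolding update_DFQuAD_eq_linear_influence using assms(1-3)
    by (intro linear_influence_mono) auto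
  have E: "energy A Att Sp s1 a \<le> energy A Att Sp s2 a"
    unfolding energy_def using att sup by (intro diff_mono sum_mono) auto
  have "update QE A Att Sp tau1 s1 a \<le> update QE A Att Sp tau2 s2 a"
    unfolding update_QE_eq_linear_influence using assms(1-3) E abs_signed_square_ratio_le_1
    by (intro linear_influence_mono signed_square_ratio_mono) (auto simp: abs_le_iff)
  moreover have "update REB A Att Sp tau1 s1 a \<le> update REB A Att Sp tau2 s2 a"
    unfolding update_REB_eq_euler_score using assms(1-3) E by (intro euler_score_mono)
  ultimately show ?thesis using dfquad by (cases sem) auto
qed

lemma update_bounds:
  assumes "0 \<le> tau a" "tau a \<le> 1"
    and "\<And>b. b \<in> attackers A Att a \<union> supporters A Sp a \<Longrightarrow> 0 \<le> s b \<and> s b \<le> 1"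
  shows "0 \<le> update sem A Att Sp tau s a \<and> update sem A Att Sp tau s a \<le> 1"
proof (cases sem)
  case DFQuAD
  have "0 \<le> (\<Prod>b\<in>attackers A Att a. 1 - s b)" "(\<Prod>b\<in>attackers A Att a. 1 - s b) \<le> 1"
    "0 \<le> (\<Prod>b\<in>supporters A Sp a. 1 - s b)" "(\<Prod>b\<in>supporters A Sp a. 1 - s b) \<le> 1"
    using assms(3) by (auto intro!: prod_nonneg prod_le_1)
  then show ?thesis
    unfolding DFQuAD update_DFQuAD_eq_linear_influence using assms(1,2)
    by (intro linear_influence_bounds) auto
next
  case QE
  show ?thesis
    unfolding QE update_QE_eq_linear_influence
    using assms(1,2) abs_signed_square_ratio_le_1[of "energy A Att Sp s a"]
    by (intro linear_influence_bounds) (auto simp: abs_le_iff)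
next
  case REB
  show ?thesis
    unfolding REB update_REB_eq_euler_score using assms(1,2) by (rule euler_score_bounds)
qed

lemma update_cong:
  assumes "\<And>b. (b, a) \<in> Att \<union> Sp \<Longrightarrow> s1 b = s2 b"
  shows "update sem A Att Sp tau s1 a = update sem A Att Sp tau s2 a"
proof -
  have "b \<in> attackers A Att a \<union> supporters A Sp a \<Longrightarrow> s1 b = s2 b" for b
    using assms by (auto simp: attackers_def supporters_def)
  then show ?thesis by (cases sem) (auto simp: energy_def Let_def intro!: prod.cong sum.cong)
qed

lemma prod_one_minus_fun_upd_zero:
  assumes "finite S"
  shows "(\<Prod>b\<in>S. 1 - (s(c := 0)) b) = (\<Prod>b\<in>S - {c}. 1 - (s b :: real))"
proof -
  have "(\<Prod>b\<in>S. 1 - (s(c := 0)) b) = (\<Prod>b\<in>S - {c}. 1 - (s(c := 0)) b)"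
    using assms by (cases "c \<in> S") (simp_all add: prod.remove)
  then show ?thesis by simp
qed

lemma sum_fun_upd_zero:
  assumes "finite S"
  shows "(\<Sum>b\<in>S. (s(c := 0)) b) = (\<Sum>b\<in>S - {c}. (s b :: real))"
proof -
  have "(\<Sum>b\<in>S. (s(c := 0)) b) = (\<Sum>b\<in>S - {c}. (s(c := 0)) b)"
    using assms by (cases "c \<in> S") (simp_all add: sum.remove)
  then show ?thesis by simp
qed

(* 0 is neutral for both aggregations: it contributes a factor 1 - 0 to the products and a
   summand 0 to the energy. *)
lemma update_remove_edge:
  assumes "finite A"
  shows "update sem A (Att - {(\<beta>, \<alpha>)}) (Sp - {(\<beta>, \<alpha>)}) tau s \<alpha>
       = update sem A Att Sp tau (s(\<beta> := 0)) \<alpha>"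
proof -
  have "attackers A (Att - {(\<beta>, \<alpha>)}) \<alpha> = attackers A Att \<alpha> - {\<beta>}"
    "supporters A (Sp - {(\<beta>, \<alpha>)}) \<alpha> = supporters A Sp \<alpha> - {\<beta>}"
    by (auto simp: attackers_def supporters_def)
  moreover have "finite (attackers A Att \<alpha>)" "finite (supporters A Sp \<alpha>)"
    using assms by (simp_all add: attackers_def supporters_def)
  ultimately show ?thesis
    by (cases sem) (simp_all only: update.simps prod_one_minus_fun_upd_zero sum_fun_upd_zero)
qed

definition is_strength :: "semantics \<Rightarrow> 'a set \<Rightarrow> ('a \<times> 'a) set \<Rightarrow> ('a \<times> 'a) set
    \<Rightarrow> ('a \<Rightarrow> real) \<Rightarrow> ('a \<Rightarrow> real) \<Rightarrow> bool" where
  "is_strength sem A Att Sp tau s \<longleftrightarrow>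
     (\<forall>a\<in>A. s a = update sem A Att Sp tau s a) \<and> (\<forall>a. a \<notin> A \<longrightarrow> s a = 0)"

lemma is_strength_agree:
  assumes s1: "is_strength sem A Att1 Sp1 tau1 s1" and s2: "is_strength sem A Att2 Sp2 tau2 s2"
    and wf: "wf (Att1 \<union> Sp1)"
    and closed: "\<And>x y. x \<in> X \<Longrightarrow> (y, x) \<in> Att1 \<union> Sp1 \<Longrightarrow> y \<in> X"
    and same_edges: "\<And>x y. x \<in> X \<Longrightarrow> x \<in> A \<Longrightarrow>
                       ((y, x) \<in> Att1 \<longleftrightarrow> (y, x) \<in> Att2) \<and> ((y, x) \<in> Sp1 \<longleftrightarrow> (y, x) \<in> Sp2)"
    and same_tau: "\<And>x. x \<in> X \<Longrightarrow> x \<in> A \<Longrightarrow> tau1 x = tau2 x"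
    and "x \<in> X"
  shows "s1 x = s2 x"
  using wf \<open>x \<in> X\<close>
proof (induction x rule: wf_induct_rule)
  case (less x)
  show ?case
  proof (cases "x \<in> A")
    case True
    have "attackers A Att1 x = attackers A Att2 x" "supporters A Sp1 x = supporters A Sp2 x"
      using same_edges[OF less.prems True] by (auto simp: attackers_def supporters_def)
    note same_parents = this same_tau[OF less.prems True]
    have "s1 x = update sem A Att1 Sp1 tau1 s1 x" using s1 True by (simp add: is_strength_def)
    also have "\<dots> = update sem A Att1 Sp1 tau1 s2 x"
      using less closed by (intro update_cong) blast
    also have "\<dots> = update sem A Att2 Sp2 tau2 s2 x"
      by (cases sem) (simp_all add: same_parents Let_def)
    also have "\<dots> = s2 x" using s2 True by (simp add: is_strength_def)
    finally show ?thesis .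
  next
    case False
    then show ?thesis using s1 s2 by (simp add: is_strength_def)
  qed
qed

lemma is_strength_strength:
  assumes wf: "wf (Att \<union> Sp)"
  shows "is_strength sem A Att Sp tau (strength sem A Att Sp tau)"
proof -
  define s where "s = wfrec (Att \<union> Sp) (\<lambda>f x. if x \<in> A then update sem A Att Sp tau f x else 0)"
  have "s x = (if x \<in> A then update sem A Att Sp tau s x else 0)" for x
  proof -
    have "update sem A Att Sp tau (cut s (Att \<union> Sp) x) x = update sem A Att Sp tau s x"
      by (rule update_cong) (simp add: cut_apply)
    then show ?thesis unfolding s_def by (subst wfrec[OF wf]) simp
  qed
  then have s: "is_strength sem A Att Sp tau s" unfolding is_strength_def by metis
  have unique: "s' = s" if "is_strength sem A Att Sp tau s'" for s'
  proof
    fix x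
    show "s' x = s x"
      by (rule is_strength_agree[OF that s wf, where X = UNIV]) simp_all
  qed
  have "strength sem A Att Sp tau = s"
    unfolding strength_def is_strength_def[symmetric] using s unique by (rule the_equality)
  then show ?thesis using s by simp
qed

lemma strength_eq_update:
  assumes "wf (Att \<union> Sp)" "a \<in> A"
  shows "strength sem A Att Sp tau a = update sem A Att Sp tau (strength sem A Att Sp tau) a"
  using is_strength_strength[OF assms(1)] assms(2) by (simp add: is_strength_def)

lemma strength_bounds:
  assumes wf: "wf (Att \<union> Sp)" and tau: "\<forall>a\<in>A. 0 \<le> tau a \<and> tau a \<le> 1"
  shows "0 \<le> strength sem A Att Sp tau x \<and> strength sem A Att Sp tau x \<le> 1"
  using wf
proof (induction x rule: wf_induct_rule)
  case (less x)
  show ?case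
  proof (cases "x \<in> A")
    case True
    have "b \<in> attackers A Att x \<union> supporters A Sp x \<Longrightarrow> (b, x) \<in> Att \<union> Sp" for b
      by (auto simp: attackers_def supporters_def)
    then show ?thesis
      unfolding strength_eq_update[OF wf True] using tau True less by (intro update_bounds) auto
  next
    case False
    then show ?thesis using is_strength_strength[OF wf] by (simp add: is_strength_def)
  qed
qed

lemma strength_eq_off_descendants:
  assumes "wf (Att1 \<union> Sp1)" "wf (Att2 \<union> Sp2)"
    and "\<And>x y. x \<in> A \<Longrightarrow> (c, x) \<notin> (Att1 \<union> Sp1)\<^sup>* \<Longrightarrow>
           ((y, x) \<in> Att1 \<longleftrightarrow> (y, x) \<in> Att2) \<and> ((y, x) \<in> Sp1 \<longleftrightarrow> (y, x) \<in> Sp2)"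
    and "\<And>x. x \<in> A \<Longrightarrow> (c, x) \<notin> (Att1 \<union> Sp1)\<^sup>* \<Longrightarrow> tau1 x = tau2 x"
    and "(c, x) \<notin> (Att1 \<union> Sp1)\<^sup>*"
  shows "strength sem A Att1 Sp1 tau1 x = strength sem A Att2 Sp2 tau2 x"
  by (rule is_strength_agree[OF is_strength_strength[OF assms(1)] is_strength_strength[OF assms(2)]
        assms(1), where X = "{x. (c, x) \<notin> (Att1 \<union> Sp1)\<^sup>*}"])
    (use assms in \<open>auto intro: rtrancl_into_rtrancl\<close>)

lemma acyclic_qbaf_wf:
  assumes "acyclic_qbaf A Att Sp tau"
  shows "wf (Att \<union> Sp)"
proof (rule finite_acyclic_wf)
  show "finite (Att \<union> Sp)"
    using assms finite_subset[of _ "A \<times> A"] by (auto simp: acyclic_qbaf_def qbaf_def)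
qed (use assms in \<open>simp add: acyclic_qbaf_def\<close>)

lemma acyclic_edge_not_rtrancl_converse:
  assumes "acyclic R" "(y, x) \<in> R"
  shows "(x, y) \<notin> R\<^sup>*"
  using assms by (meson acyclic_def rtrancl_into_trancl1)

lemma strength_remove_edge:
  assumes q: "acyclic_qbaf A Att Sp tau" and "\<alpha> \<in> A"
  shows "strength sem A (Att - {(\<beta>, \<alpha>)}) (Sp - {(\<beta>, \<alpha>)}) tau \<alpha>
       = update sem A Att Sp tau ((strength sem A Att Sp tau)(\<beta> := 0)) \<alpha>"
proof -
  let ?Att' = "Att - {(\<beta>, \<alpha>)}" and ?Sp' = "Sp - {(\<beta>, \<alpha>)}"
  let ?s = "strength sem A Att Sp tau" and ?s' = "strength sem A ?Att' ?Sp' tau"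
  have wf: "wf (Att \<union> Sp)" using q by (rule acyclic_qbaf_wf)
  have wf': "wf (?Att' \<union> ?Sp')" by (rule wf_subset[OF wf]) auto
  have "acyclic (Att \<union> Sp)" using q by (simp add: acyclic_qbaf_def)
  have parents_agree: "?s y = ?s' y" if "(y, \<alpha>) \<in> ?Att' \<union> ?Sp'" for y
  proof (rule strength_eq_off_descendants[OF wf wf'])
    show "(\<alpha>, y) \<notin> (Att \<union> Sp)\<^sup>*"
      using acyclic_edge_not_rtrancl_converse[OF \<open>acyclic (Att \<union> Sp)\<close>] that by blast
  qed auto
  have "?s' \<alpha> = update sem A ?Att' ?Sp' tau ?s' \<alpha>" by (rule strength_eq_update[OF wf' \<open>\<alpha> \<in> A\<close>])
  also have "\<dots> = update sem A ?Att' ?Sp' tau ?s \<alpha>" using parents_agree by (intro update_cong) simp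
  also have "\<dots> = update sem A Att Sp tau (?s(\<beta> := 0)) \<alpha>"
    using q by (intro update_remove_edge) (simp add: acyclic_qbaf_def qbaf_def)
  finally show ?thesis .
qed

lemma strength_remove_attack:
  assumes q: "acyclic_qbaf A Att Sp tau" and "\<alpha> \<in> A" and "(\<beta>, \<alpha>) \<in> Att"
  shows "strength sem A Att Sp tau \<alpha> \<le> strength sem A (Att - {(\<beta>, \<alpha>)}) (Sp - {(\<beta>, \<alpha>)}) tau \<alpha>"
proof -
  let ?s = "strength sem A Att Sp tau"
  have wf: "wf (Att \<union> Sp)" using q by (rule acyclic_qbaf_wf)
  have bounds: "0 \<le> ?s x \<and> ?s x \<le> 1" "0 \<le> tau \<alpha> \<and> tau \<alpha> \<le> 1" for x
    using strength_bounds[OF wf] q \<open>\<alpha> \<in> A\<close> by (auto simp: acyclic_qbaf_def qbaf_def)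
  have "\<beta> \<notin> supporters A Sp \<alpha>"
    using q \<open>(\<beta>, \<alpha>) \<in> Att\<close> by (auto simp: acyclic_qbaf_def qbaf_def supporters_def)
  then show ?thesis
    unfolding strength_eq_update[OF wf \<open>\<alpha> \<in> A\<close>] strength_remove_edge[OF q \<open>\<alpha> \<in> A\<close>]
    using bounds by (intro update_mono) auto
qed

lemma strength_remove_support:
  assumes q: "acyclic_qbaf A Att Sp tau" and "\<alpha> \<in> A" and "(\<beta>, \<alpha>) \<in> Sp"
  shows "strength sem A (Att - {(\<beta>, \<alpha>)}) (Sp - {(\<beta>, \<alpha>)}) tau \<alpha> \<le> strength sem A Att Sp tau \<alpha>"
proof -
  let ?s = "strength sem A Att Sp tau"
  have wf: "wf (Att \<union> Sp)" using q by (rule acyclic_qbaf_wf)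
  have bounds: "0 \<le> ?s x \<and> ?s x \<le> 1" "0 \<le> tau \<alpha> \<and> tau \<alpha> \<le> 1" for x
    using strength_bounds[OF wf] q \<open>\<alpha> \<in> A\<close> by (auto simp: acyclic_qbaf_def qbaf_def)
  have "\<beta> \<notin> attackers A Att \<alpha>"
    using q \<open>(\<beta>, \<alpha>) \<in> Sp\<close> by (auto simp: acyclic_qbaf_def qbaf_def attackers_def)
  then show ?thesis
    unfolding strength_eq_update[OF wf \<open>\<alpha> \<in> A\<close>] strength_remove_edge[OF q \<open>\<alpha> \<in> A\<close>]
    using bounds by (intro update_mono) auto
qed

lemma acyclic_not_rtrancl_from_only_child:
  assumes "acyclic R" and only_child: "R `` {\<beta>} \<subseteq> {\<alpha>}"
    and "(y, \<alpha>) \<in> R" "y \<noteq> \<beta>"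
  shows "(\<beta>, y) \<notin> R\<^sup>*"
proof
  assume "(\<beta>, y) \<in> R\<^sup>*"
  then have "(\<beta>, y) \<in> R\<^sup>+" using \<open>y \<noteq> \<beta>\<close> by (simp add: rtrancl_eq_or_trancl)
  then obtain c where "(\<beta>, c) \<in> R" "(c, y) \<in> R\<^sup>*" by (meson tranclD)
  then have "(\<alpha>, y) \<in> R\<^sup>*" using only_child by blast
  then show False using acyclic_edge_not_rtrancl_converse[OF assms(1,3)] by blast
qed

lemma strength_change_base_score_off_descendants:
  assumes wf: "wf (Att \<union> Sp)" and same: "\<forall>\<gamma>\<in>A - {\<beta>}. tau \<gamma> = tau' \<gamma>"
    and "(\<beta>, x) \<notin> (Att \<union> Sp)\<^sup>*"
  shows "strength sem A Att Sp tau x = strength sem A Att Sp tau' x"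
proof (rule strength_eq_off_descendants[OF wf wf])
  fix z assume "z \<in> A" "(\<beta>, z) \<notin> (Att \<union> Sp)\<^sup>*"
  then show "tau z = tau' z" using same by auto
qed (use assms(3) in simp_all)

lemma strength_raise_base_score:
  assumes q: "acyclic_qbaf A Att Sp tau" and tau': "\<forall>a\<in>A. 0 \<le> tau' a \<and> tau' a \<le> 1"
    and "\<beta> \<in> A" and raise: "tau \<beta> \<le> tau' \<beta>" and same: "\<forall>\<gamma>\<in>A - {\<beta>}. tau \<gamma> = tau' \<gamma>"
  shows "strength sem A Att Sp tau \<beta> \<le> strength sem A Att Sp tau' \<beta>"
proof -
  let ?s = "strength sem A Att Sp tau" and ?s' = "strength sem A Att Sp tau'"
  have wf: "wf (Att \<union> Sp)" using q by (rule acyclic_qbaf_wf)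
  have "acyclic (Att \<union> Sp)" using q by (simp add: acyclic_qbaf_def)
  then have parents_eq: "?s b = ?s' b" if "b \<in> attackers A Att \<beta> \<union> supporters A Sp \<beta>" for b
    using that
    by (intro strength_change_base_score_off_descendants[OF wf same] acyclic_edge_not_rtrancl_converse)
      (auto simp: attackers_def supporters_def)
  have "0 \<le> ?s b \<and> ?s b \<le> 1" for b
    using strength_bounds[OF wf] q by (auto simp: acyclic_qbaf_def qbaf_def)
  moreover have "0 \<le> tau \<beta>" "tau' \<beta> \<le> 1"
    using q tau' \<open>\<beta> \<in> A\<close> by (auto simp: acyclic_qbaf_def qbaf_def)
  ultimately show ?thesis
    unfolding strength_eq_update[OF wf \<open>\<beta> \<in> A\<close>] using raise
    by (intro update_mono) (simp_all add: parents_eq[symmetric])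
qed

lemma strength_raise_base_score_only_child:
  assumes q: "acyclic_qbaf A Att Sp tau" and tau': "\<forall>a\<in>A. 0 \<le> tau' a \<and> tau' a \<le> 1"
    and raise: "tau \<beta> \<le> tau' \<beta>" and same: "\<forall>\<gamma>\<in>A - {\<beta>}. tau \<gamma> = tau' \<gamma>"
    and only_child: "(Att \<union> Sp) `` {\<beta>} = {\<alpha>}"
  shows "(\<beta>, \<alpha>) \<in> Att \<Longrightarrow> strength sem A Att Sp tau' \<alpha> \<le> strength sem A Att Sp tau \<alpha>"
    and "(\<beta>, \<alpha>) \<in> Sp \<Longrightarrow> strength sem A Att Sp tau \<alpha> \<le> strength sem A Att Sp tau' \<alpha>"
proof -
  let ?s = "strength sem A Att Sp tau" and ?s' = "strength sem A Att Sp tau'"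
  have wf: "wf (Att \<union> Sp)" using q by (rule acyclic_qbaf_wf)
  have edge: "(\<beta>, \<alpha>) \<in> Att \<union> Sp" using only_child by blast
  have acyc: "acyclic (Att \<union> Sp)" and disj: "Att \<inter> Sp = {}"
    and "\<alpha> \<in> A" "\<beta> \<in> A" and tau_bounds: "0 \<le> tau \<alpha>" "tau \<alpha> \<le> 1"
    using q edge by (auto simp: acyclic_qbaf_def qbaf_def)
  have "\<alpha> \<noteq> \<beta>" using acyc edge by (auto simp: acyclic_def)
  then have "tau \<alpha> = tau' \<alpha>" using same \<open>\<alpha> \<in> A\<close> by simp
  have bounds: "0 \<le> ?s b \<and> ?s b \<le> 1" "0 \<le> ?s' b \<and> ?s' b \<le> 1" for b
    using strength_bounds[OF wf] q tau' by (auto simp: acyclic_qbaf_def qbaf_def)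
  have raised: "?s \<beta> \<le> ?s' \<beta>" by (rule strength_raise_base_score[OF q tau' \<open>\<beta> \<in> A\<close> raise same])
  have other_parents: "?s b = ?s' b" if "b \<in> attackers A Att \<alpha> \<union> supporters A Sp \<alpha>" "b \<noteq> \<beta>" for b
    using strength_change_base_score_off_descendants[OF wf same]
      acyclic_not_rtrancl_from_only_child[OF acyc equalityD1[OF only_child] _ \<open>b \<noteq> \<beta>\<close>] that
    by (auto simp: attackers_def supporters_def)
  have parent_le: "0 \<le> ?s b \<and> ?s b \<le> ?s' b \<and> ?s' b \<le> 1"
    if "b \<in> attackers A Att \<alpha> \<union> supporters A Sp \<alpha>" for b
    using bounds raised other_parents[OF that] by (cases "b = \<beta>") auto
  have other_parent_ge: "0 \<le> ?s' b \<and> ?s' b \<le> ?s b \<and> ?s b \<le> 1"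
    if "b \<in> attackers A Att \<alpha> \<union> supporters A Sp \<alpha>" "b \<noteq> \<beta>" for b
    using bounds other_parents[OF that] by simp
  note update_at_\<alpha> = strength_eq_update[OF wf \<open>\<alpha> \<in> A\<close>]
  show "?s' \<alpha> \<le> ?s \<alpha>" if "(\<beta>, \<alpha>) \<in> Att"
    unfolding update_at_\<alpha>
  proof (rule update_mono)
    fix b assume "b \<in> supporters A Sp \<alpha>"
    moreover have "(\<beta>, \<alpha>) \<notin> Sp" using that disj by blast
    ultimately show "0 \<le> ?s' b \<and> ?s' b \<le> ?s b \<and> ?s b \<le> 1"
      by (intro other_parent_ge) (auto simp: supporters_def)
  qed (use tau_bounds \<open>tau \<alpha> = tau' \<alpha>\<close> parent_le in simp_all)
  show "?s \<alpha> \<le> ?s' \<alpha>" if "(\<beta>, \<alpha>) \<in> Sp"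
    unfolding update_at_\<alpha>
  proof (rule update_mono)
    fix b assume "b \<in> attackers A Att \<alpha>"
    moreover have "(\<beta>, \<alpha>) \<notin> Att" using that disj by blast
    ultimately show "0 \<le> ?s' b \<and> ?s' b \<le> ?s b \<and> ?s b \<le> 1"
      by (intro other_parent_ge) (auto simp: attackers_def)
  qed (use tau_bounds \<open>tau \<alpha> = tau' \<alpha>\<close> parent_le in simp_all)
qed

theorem proposition1:
  fixes sem :: semantics
    and A :: "'a set" and Att Sp :: "('a \<times> 'a) set" and tau tau' :: "'a \<Rightarrow> real"
    and \<alpha> \<beta> :: 'a
  assumes "acyclic_qbaf A Att Sp tau"
    and "\<alpha> \<in> A" and "\<beta> \<in> A" and "\<alpha> \<noteq> \<beta>"
    and "{e \<in> Att \<union> Sp. fst e = \<beta>} = {(\<beta>, \<alpha>)}"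
    and "\<forall>a\<in>A. 0 \<le> tau' a \<and> tau' a \<le> 1"
  shows "((\<beta>, \<alpha>) \<in> Att \<longrightarrow>
            strength sem A Att Sp tau \<alpha>
              \<le> strength sem A (Att \<inter> ((Att \<union> Sp) - {(\<beta>, \<alpha>)}))
                                (Sp \<inter> ((Att \<union> Sp) - {(\<beta>, \<alpha>)})) tau \<alpha>)
       \<and> ((\<beta>, \<alpha>) \<in> Sp \<longrightarrow>
            strength sem A Att Sp tau \<alpha>
              \<ge> strength sem A (Att \<inter> ((Att \<union> Sp) - {(\<beta>, \<alpha>)}))
                                (Sp \<inter> ((Att \<union> Sp) - {(\<beta>, \<alpha>)})) tau \<alpha>)
       \<and> ((\<beta>, \<alpha>) \<in> Att \<and> tau \<beta> \<le> tau' \<beta> \<and> (\<forall>\<gamma>\<in>A - {\<beta>}. tau \<gamma> = tau' \<gamma>) \<longrightarrow>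
            strength sem A Att Sp tau \<alpha> \<ge> strength sem A Att Sp tau' \<alpha>)
       \<and> ((\<beta>, \<alpha>) \<in> Sp \<and> tau \<beta> \<le> tau' \<beta> \<and> (\<forall>\<gamma>\<in>A - {\<beta>}. tau \<gamma> = tau' \<gamma>) \<longrightarrow>
            strength sem A Att Sp tau \<alpha> \<le> strength sem A Att Sp tau' \<alpha>)"
proof -
  have "(Att \<union> Sp) `` {\<beta>} = snd ` {e \<in> Att \<union> Sp. fst e = \<beta>}" by force
  then have only_child: "(Att \<union> Sp) `` {\<beta>} = {\<alpha>}" unfolding assms(5) by simp
  have removed: "Att \<inter> ((Att \<union> Sp) - {(\<beta>, \<alpha>)}) = Att - {(\<beta>, \<alpha>)}"
    "Sp \<inter> ((Att \<union> Sp) - {(\<beta>, \<alpha>)}) = Sp - {(\<beta>, \<alpha>)}" by auto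
  show ?thesis
    unfolding removed
    using strength_remove_attack[OF assms(1,2)] strength_remove_support[OF assms(1,2)]
      strength_raise_base_score_only_child[OF assms(1,6) _ _ only_child]
    by blast
qed

end
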